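(* Let $u,v:\mathbb{C}\to\mathbb{R}$ be harmonic, $f=u+iv$, $\mathcal{R}_f=f(\mathbb{C})$, and suppose $\mathcal{D}(\mathcal{R}_f)\subset\{e^{i\theta}: -\pi\le\theta\le0\}$. For $t\in\mathbb{R}$ let $E_t=\{s\in\mathbb{R}: t+is\in\mathcal{R}_f\}$ and $\Phi(t)=\max\{\sup E_t,\,0\}$ (with $\sup\varnothing=-\infty$). Then each $E_t$ is bounded above, so $\Phi:\mathbb{R}\to[0,+\infty)$ is well defined; moreover $\Phi$ is locally bounded and $\lim_{|t|\to\infty}\Phi(t)/|t|=0$.
   Context: $\partial\mathbb{D}$ is the unit circle. For $\mathcal{R}\subset\mathbb{C}$, $e^{i\theta}\in\partial\mathbb{D}$ is an asymptotic direction of $\mathcal{R}$ if there exist $w_n\in\mathcal{R}$ and $\varepsilon_n>0$, $\varepsilon_n\to0$, with $\varepsilon_n w_n\to e^{i\theta}$; $\mathcal{D}(\mathcal{R})$ is the set of asymptotic directions. *)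

theory Defs
  imports "HOL-Analysis.Analysis"
begin

definition has_partial_x :: "(complex \<Rightarrow> real) \<Rightarrow> complex \<Rightarrow> real \<Rightarrow> bool" where
  "has_partial_x u z d \<longleftrightarrow> ((\<lambda>t::real. u (z + complex_of_real t)) has_real_derivative d) (at 0)"

definition has_partial_y :: "(complex \<Rightarrow> real) \<Rightarrow> complex \<Rightarrow> real \<Rightarrow> bool" where
  "has_partial_y u z d \<longleftrightarrow> ((\<lambda>t::real. u (z + complex_of_real t * \<i>)) has_real_derivative d) (at 0)"

definition harmonic_C :: "(complex \<Rightarrow> real) \<Rightarrow> bool" where
  "harmonic_C u \<longleftrightarrow> continuous_on UNIV u \<and>
     (\<exists>ux uy uxx uxy uyx uyy.
        (\<forall>z. has_partial_x u z (ux z) \<and> has_partial_y u z (uy z) \<and>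
             has_partial_x ux z (uxx z) \<and> has_partial_y ux z (uxy z) \<and>
             has_partial_x uy z (uyx z) \<and> has_partial_y uy z (uyy z)) \<and>
        continuous_on UNIV ux \<and> continuous_on UNIV uy \<and>
        continuous_on UNIV uxx \<and> continuous_on UNIV uxy \<and>
        continuous_on UNIV uyx \<and> continuous_on UNIV uyy \<and>
        (\<forall>z. uxx z + uyy z = 0))"

definition asymp_dirs :: "complex set \<Rightarrow> complex set" where
  "asymp_dirs R = {w. norm w = 1 \<and>
     (\<exists>(ws :: nat \<Rightarrow> complex) (eps :: nat \<Rightarrow> real).
        (\<forall>n. ws n \<in> R \<and> eps n > 0) \<and> eps \<longlonglongrightarrow> 0 \<and>
        (\<lambda>n. complex_of_real (eps n) * ws n) \<longlonglongrightarrow> w)}"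

definition vsection :: "complex set \<Rightarrow> real \<Rightarrow> real set" where
  "vsection R t = {s. Complex t s \<in> R}"

definition Phi :: "complex set \<Rightarrow> real \<Rightarrow> real" where
  "Phi R t = (if vsection R t = {} then 0 else max (Sup (vsection R t)) 0)"

end

theory Submission
  imports Defs
begin

text \<open>If points of \<open>R\<close> with
\<open>Im w \<ge> c |w|\<close> were unbounded, their normalisations would accumulate (by compactness of the
circle) at an asymptotic direction with imaginary part \<open>\<ge> c > 0\<close>. Hence for every \<open>e > 0\<close>
the points of \<open>R\<close> above the cone \<open>y > e |t|\<close> form a bounded set, which gives
\<open>\<Phi>(t) \<le> max (e |t|) M\<^sub>e\<close> and so all three claims.\<close>

lemma normalized_limit_in_asymp_dirs:
  fixes w :: "nat \<Rightarrow> complex"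
  assumes in_R: "\<And>n. w n \<in> R"
    and norm_large: "\<And>n. norm (w n) > real n + 1"
    and lim: "(\<lambda>n. w n / complex_of_real (norm (w n))) \<longlonglongrightarrow> l"
  shows "l \<in> asymp_dirs R"
proof -
  have norm_pos: "norm (w n) > 0" for n
    using norm_large[of n] by linarith
  define eps where "eps n = 1 / norm (w n)" for n
  have eps_pos: "eps n > 0" for n
    using norm_pos by (simp add: eps_def)
  have "norm (eps n) \<le> 1 / real (Suc n)" for n
    using norm_large[of n] eps_pos[of n] by (simp add: eps_def frac_le)
  then have eps_lim: "eps \<longlonglongrightarrow> 0"
    by (intro Lim_null_comparison[OF _ LIMSEQ_inverse_real_of_nat[unfolded inverse_eq_divide]]) simp
  have scaled: "(\<lambda>n. complex_of_real (eps n) * w n) = (\<lambda>n. w n / complex_of_real (norm (w n)))"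
    by (auto simp: eps_def field_simps)
  have "norm (w n / complex_of_real (norm (w n))) = 1" for n
    using norm_pos[of n] by (simp add: norm_divide)
  then have "(\<lambda>n. norm (w n / complex_of_real (norm (w n)))) \<longlonglongrightarrow> 1"
    by simp
  then have "norm l = 1"
    using tendsto_norm[OF lim] LIMSEQ_unique by blast
  then show ?thesis
    unfolding asymp_dirs_def using in_R eps_pos eps_lim lim
    by (intro CollectI conjI exI[of _ w] exI[of _ eps]) (simp_all add: scaled)
qed

lemma bounded_in_cone_if_asymp_dirs_lower:
  fixes R :: "complex set" and c :: real
  assumes lower: "\<forall>l\<in>asymp_dirs R. Im l \<le> 0" and "c > 0"
  shows "\<exists>M. \<forall>w\<in>R. c * norm w \<le> Im w \<longrightarrow> norm w \<le> M"
proof (rule ccontr)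
  assume "\<not> ?thesis"
  then have "\<forall>n::nat. \<exists>w\<in>R. c * norm w \<le> Im w \<and> norm w > real n + 1"
    by (meson not_le)
  then obtain w where in_R: "\<And>n. w n \<in> R" and cone: "\<And>n. c * norm (w n) \<le> Im (w n)"
      and large: "\<And>n. norm (w n) > real n + 1"
    by metis
  have norm_pos: "norm (w n) > 0" for n
    using large[of n] by linarith
  define z where "z n = w n / complex_of_real (norm (w n))" for n
  have "z n \<in> sphere 0 1" for n
    using norm_pos[of n] by (simp add: z_def norm_divide)
  then obtain l r where "strict_mono r" and z_lim: "(z \<circ> r) \<longlonglongrightarrow> l"
    using compact_sphere compact_imp_seq_compact seq_compactE by metis
  have "real n + 1 < norm (w (r n))" for n
    using large[of "r n"] seq_suble[OF \<open>strict_mono r\<close>, of n] by linarith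
  then have "l \<in> asymp_dirs R"
    using z_lim in_R by (intro normalized_limit_in_asymp_dirs[of "w \<circ> r"]) (auto simp: z_def o_def)
  moreover have "c \<le> Im (z n)" for n
    using cone[of n] norm_pos[of n] by (simp add: z_def Im_divide_of_real pos_le_divide_eq)
  then have "c \<le> Im l"
    using tendsto_Im[OF z_lim] by (intro LIMSEQ_le_const) (auto simp: o_def)
  ultimately show False
    using lower \<open>c > 0\<close> by fastforce
qed

lemma vsection_le_max_cone:
  fixes R :: "complex set" and e :: real
  assumes lower: "\<forall>l\<in>asymp_dirs R. Im l \<le> 0" and "e > 0"
  obtains M where "M \<ge> 0" "\<And>t y. Complex t y \<in> R \<Longrightarrow> y \<le> max (e * \<bar>t\<bar>) M"
proof -
  obtain M where M: "\<And>w. w \<in> R \<Longrightarrow> e / (1 + e) * norm w \<le> Im w \<Longrightarrow> norm w \<le> M"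
    using bounded_in_cone_if_asymp_dirs_lower[of R "e / (1 + e)", OF lower] \<open>e > 0\<close> by auto
  have "y \<le> max (e * \<bar>t\<bar>) (max M 0)" if "Complex t y \<in> R" for t y
  proof (cases "y \<le> e * \<bar>t\<bar>")
    case False
    have "norm (Complex t y) \<le> \<bar>t\<bar> + \<bar>y\<bar>"
      using cmod_le[of "Complex t y"] by simp
    moreover have "0 \<le> e * \<bar>t\<bar>"
      using \<open>e > 0\<close> by simp
    then have "y > 0"
      using False by linarith
    ultimately have "e * norm (Complex t y) \<le> e * \<bar>t\<bar> + e * y"
      using \<open>e > 0\<close> by (simp add: distrib_left[symmetric])
    also have "\<dots> \<le> (1 + e) * y"
      using False by (simp add: algebra_simps)
    finally have "e / (1 + e) * norm (Complex t y) \<le> y"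
      using \<open>e > 0\<close> by (simp add: field_simps)
    then have "norm (Complex t y) \<le> M"
      using M[OF that] by simp
    then show ?thesis
      using abs_Im_le_cmod[of "Complex t y"] by simp
  qed simp
  then show thesis
    using that[of "max M 0"] by auto
qed

lemma Im_le_0_if_lower_half_circle:
  assumes "w \<in> {cis \<theta> | \<theta>. - pi \<le> \<theta> \<and> \<theta> \<le> 0}"
  shows "Im w \<le> 0"
proof -
  obtain \<theta> where "w = cis \<theta>" "- pi \<le> \<theta>" "\<theta> \<le> 0"
    using assms by blast
  moreover have "sin (- \<theta>) \<ge> 0"
    using calculation by (intro sin_ge_zero) auto
  ultimately show ?thesis
    by simp
qed

lemma Phi_nonneg: "Phi R t \<ge> 0"
  unfolding Phi_def by auto

lemma Phi_le:
  assumes "\<And>y. y \<in> vsection R t \<Longrightarrow> y \<le> K" "K \<ge> 0"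
  shows "Phi R t \<le> K"
  using assms unfolding Phi_def by (auto intro: cSup_least)

lemma bdd_above_vsection_if_asymp_dirs_lower:
  assumes lower: "\<forall>l\<in>asymp_dirs R. Im l \<le> 0"
  shows "bdd_above (vsection R t)"
proof -
  obtain M where "\<And>t y. Complex t y \<in> R \<Longrightarrow> y \<le> max (1 * \<bar>t\<bar>) M"
    using vsection_le_max_cone[of R 1, OF lower zero_less_one] by blast
  then show ?thesis
    unfolding vsection_def bdd_above_def by blast
qed

lemma Phi_le_max_cone:
  fixes R :: "complex set" and e :: real
  assumes lower: "\<forall>l\<in>asymp_dirs R. Im l \<le> 0" and "e > 0"
  obtains M where "M \<ge> 0" "\<And>t. Phi R t \<le> max (e * \<bar>t\<bar>) M"
proof -
  obtain M where "M \<ge> 0" and M: "\<And>t y. Complex t y \<in> R \<Longrightarrow> y \<le> max (e * \<bar>t\<bar>) M"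
    using vsection_le_max_cone[OF lower \<open>e > 0\<close>] by blast
  then show thesis
    by (intro that[of M]) (auto intro!: Phi_le simp: vsection_def)
qed

lemma Phi_locally_bounded:
  assumes "\<And>t. Phi R t \<le> max \<bar>t\<bar> M"
  shows "\<exists>e>0. \<exists>B. \<forall>s. \<bar>s - t\<bar> < e \<longrightarrow> Phi R s \<le> B"
proof -
  have "Phi R s \<le> max (\<bar>t\<bar> + 1) M" if "\<bar>s - t\<bar> < 1" for s
    using assms[of s] that by auto
  then show ?thesis
    by (intro exI[of _ "1::real"]) auto
qed

lemma Phi_sublinear:
  assumes lower: "\<forall>l\<in>asymp_dirs R. Im l \<le> 0"
  shows "((\<lambda>t. Phi R t / \<bar>t\<bar>) \<longlongrightarrow> 0) at_infinity"
  unfolding Lim_at_infinity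
proof (intro allI impI)
  fix e :: real
  assume "e > 0"
  then obtain M where "M \<ge> 0" and M: "\<And>t. Phi R t \<le> max (e / 2 * \<bar>t\<bar>) M"
    using Phi_le_max_cone[of R "e / 2", OF lower] \<open>e > 0\<close> by (metis half_gt_zero)
  have bound: "\<bar>Phi R t / \<bar>t\<bar>\<bar> \<le> e / 2" if t: "2 * M / e + 1 \<le> norm t" for t
  proof -
    have "0 \<le> 2 * M / e"
      using \<open>M \<ge> 0\<close> \<open>e > 0\<close> by simp
    then have "\<bar>t\<bar> > 0" "2 * M / e \<le> \<bar>t\<bar>"
      using t by auto
    then have "M \<le> e / 2 * \<bar>t\<bar>"
      using \<open>e > 0\<close> by (simp add: field_simps)
    then have "Phi R t \<le> e / 2 * \<bar>t\<bar>"
      using M[of t] by linarith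
    then show ?thesis
      using \<open>\<bar>t\<bar> > 0\<close> Phi_nonneg[of R t] by (simp add: divide_le_eq abs_div_pos)
  qed
  show "\<exists>b. \<forall>t. b \<le> norm t \<longrightarrow> dist (Phi R t / \<bar>t\<bar>) 0 < e"
  proof (intro exI[of _ "2 * M / e + 1"] allI impI)
    fix t :: real
    assume "2 * M / e + 1 \<le> norm t"
    then have "\<bar>Phi R t / \<bar>t\<bar>\<bar> \<le> e / 2"
      by (rule bound)
    then show "dist (Phi R t / \<bar>t\<bar>) 0 < e"
      using \<open>e > 0\<close> unfolding dist_real_def by linarith
  qed
qed

theorem lemma6:
  fixes u v :: "complex \<Rightarrow> real"
  assumes "harmonic_C u" and "harmonic_C v"
    and "asymp_dirs (range (\<lambda>z. Complex (u z) (v z))) \<subseteq> {cis \<theta> | \<theta>. - pi \<le> \<theta> \<and> \<theta> \<le> 0}"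
  shows "(\<forall>t. bdd_above (vsection (range (\<lambda>z. Complex (u z) (v z))) t))
    \<and> (\<forall>t. \<exists>e>0. \<exists>B. \<forall>s. \<bar>s - t\<bar> < e \<longrightarrow> Phi (range (\<lambda>z. Complex (u z) (v z))) s \<le> B)
    \<and> ((\<lambda>t. Phi (range (\<lambda>z. Complex (u z) (v z))) t / \<bar>t\<bar>) \<longlongrightarrow> 0) at_infinity"
proof -
  define R where "R = range (\<lambda>z. Complex (u z) (v z))"
  have lower: "\<forall>l\<in>asymp_dirs R. Im l \<le> 0"
    using assms(3) Im_le_0_if_lower_half_circle unfolding R_def by blast
  obtain M where "\<And>t. Phi R t \<le> max \<bar>t\<bar> M"
    using Phi_le_max_cone[of R 1, OF lower zero_less_one] by (metis mult_1)
  then have "\<forall>t. \<exists>e>0. \<exists>B. \<forall>s. \<bar>s - t\<bar> < e \<longrightarrow> Phi R s \<le> B"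
    using Phi_locally_bounded[of R M] by blast
  with bdd_above_vsection_if_asymp_dirs_lower[OF lower] Phi_sublinear[OF lower] show ?thesis
    unfolding R_def by blast
qed

end
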